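(* Let $p\geq 5$ be an integer and let $(m_n)$ be the metallic numbers defined by $m_{-1}=0$, $m_0=1$, $m_{n+2}=(p-2)m_{n+1}-m_n$. Then every positive integer $n$ can be written as $$n=\sum_{i=0}^{k} a_i\,m_i$$ for some $k\geq 0$ and digits $a_i\in\{1,2,\dots,p-2\}$ for all $i\in\{0,\dots,k\}$.
   Context: $p\ge 5$ is a fixed integer. The metallic numbers are $m_{-1}=0$, $m_0=1$, $m_{n+2}=(p-2)m_{n+1}-m_n$ for $n\ge -1$ (so $m_1=p-2$). *)

theory Defs
  imports Main
begin

text \<open>Metallic numbers: metallic p n = m_n for n >= 0, where m_{-1} = 0, m_0 = 1,
  m_{n+2} = (p-2) m_{n+1} - m_n. Thus m_1 = (p-2) m_0 - m_{-1} = p - 2.\<close>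
fun metallic :: "int \<Rightarrow> nat \<Rightarrow> int" where
  "metallic p 0 = 1"
| "metallic p (Suc 0) = p - 2"
| "metallic p (Suc (Suc n)) = (p - 2) * metallic p (Suc n) - metallic p n"

end

theory Submission
  imports Defs
begin

text \<open>Let \<open>S\<^sub>k = m\<^sub>0 + \<dots> + m\<^sub>k\<close>. The sums with exactly \<open>k + 1\<close> digits fill the whole
  interval \<open>[S\<^sub>k, (p - 2) S\<^sub>k]\<close>: given \<open>n\<close> in it, the top digit \<open>a\<^sub>k\<close> can be chosen so that
  \<open>n - a\<^sub>k m\<^sub>k\<close> lies in the previous interval, because the step \<open>m\<^sub>k \<le> (p - 3) S\<^sub>k\<^sub>-\<^sub>1 + 1\<close>
  does not exceed the number of integers in that interval. The same inequality gives
  \<open>S\<^sub>k \<le> (p - 2) S\<^sub>k\<^sub>-\<^sub>1 + 1\<close>, so consecutive intervals leave no gap, and they start at \<open>S\<^sub>0 = 1\<close>.\<close>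

lemma metallic_ge_one_and_le_Suc:
  assumes "p \<ge> 4"
  shows "1 \<le> metallic p k \<and> metallic p k \<le> metallic p (Suc k)"
proof (induction k)
  case 0
  then show ?case using assms by simp
next
  case (Suc k)
  have "2 * metallic p (Suc k) \<le> (p - 2) * metallic p (Suc k)"
    using Suc assms by (intro mult_right_mono) auto
  moreover have "metallic p (Suc (Suc k)) = (p - 2) * metallic p (Suc k) - metallic p k"
    by simp
  ultimately show ?case using Suc by linarith
qed

lemma metallic_Suc_le:
  assumes "p \<ge> 4"
  shows "metallic p (Suc k) \<le> (p - 2) * metallic p k"
proof (cases k)
  case (Suc j)
  then show ?thesis using metallic_ge_one_and_le_Suc[OF assms, of j] by simp
qed simp

lemma metallic_Suc_le_sum:
  assumes "p \<ge> 4"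
  shows "metallic p (Suc k) \<le> (p - 3) * (\<Sum>i=0..k. metallic p i) + 1"
proof (cases k)
  case (Suc j)
  have "metallic p j \<le> (\<Sum>i=0..j. metallic p i)"
    using metallic_ge_one_and_le_Suc[OF assms] by (intro member_le_sum) (auto intro: order_trans[OF zero_le_one])
  then have "metallic p j + metallic p (Suc j) \<le> (\<Sum>i=0..k. metallic p i)"
    using Suc by simp
  then have "(p - 3) * (metallic p j + metallic p (Suc j)) \<le> (p - 3) * (\<Sum>i=0..k. metallic p i)"
    using assms by (intro mult_left_mono) auto
  moreover have "metallic p (Suc j) \<le> (p - 2) * metallic p j"
    by (rule metallic_Suc_le[OF assms])
  ultimately show ?thesis using Suc by (simp add: algebra_simps)
qed simp

lemma sum_metallic_Suc_le:
  assumes "p \<ge> 4"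
  shows "(\<Sum>i=0..Suc k. metallic p i) \<le> (p - 2) * (\<Sum>i=0..k. metallic p i) + 1"
  using metallic_Suc_le_sum[OF assms, of k] by (simp add: algebra_simps)

lemma sum_metallic_ge:
  assumes "p \<ge> 4"
  shows "int k + 1 \<le> (\<Sum>i=0..k. metallic p i)"
proof -
  have "(\<Sum>i=0..k. (1::int)) \<le> (\<Sum>i=0..k. metallic p i)"
    using metallic_ge_one_and_le_Suc[OF assms] by (intro sum_mono) auto
  then show ?thesis by simp
qed

lemma exists_multiple_shift_into_interval:
  fixes n L U m q :: int
  assumes "0 < m" "1 \<le> q" "m \<le> U - L + 1" "L + m \<le> n" "n \<le> U + q * m"
  shows "\<exists>a. 1 \<le> a \<and> a \<le> q \<and> L \<le> n - a * m \<and> n - a * m \<le> U"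
proof -
  \<comment> \<open>the digit is \<open>min q ((n - L) div m)\<close>\<close>
  define d where "d = (n - L) div m"
  have split: "n - L = d * m + (n - L) mod m" and rem: "0 \<le> (n - L) mod m" "(n - L) mod m < m"
    using assms(1) unfolding d_def by simp_all
  have "0 < d"
    using assms(1,4) unfolding d_def by (simp add: pos_imp_zdiv_pos_iff)
  show ?thesis
  proof (cases "q \<le> d")
    case True
    have "q * m \<le> d * m" using True assms(1) by (intro mult_right_mono) auto
    then show ?thesis using True split rem assms(2,5) by (intro exI[of _ q]) linarith
  next
    case False
    then show ?thesis using \<open>0 < d\<close> split rem assms(3)
      by (intro exI[of _ d]) linarith
  qed
qed

lemma metallic_digits_fill_interval:
  assumes "p \<ge> 4"
  shows "(\<Sum>i=0..k. metallic p i) \<le> n \<Longrightarrow> n \<le> (p - 2) * (\<Sum>i=0..k. metallic p i) \<Longrightarrow>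
    \<exists>a::nat \<Rightarrow> int. (\<forall>i\<in>{0..k}. a i \<in> {1..p-2}) \<and> n = (\<Sum>i=0..k. a i * metallic p i)"
proof (induction k arbitrary: n)
  case 0
  then show ?case by (intro exI[of _ "\<lambda>_. n"]) auto
next
  case (Suc k)
  let ?S = "\<Sum>i=0..k. metallic p i"
  let ?m = "metallic p (Suc k)"
  have "0 < ?m" using metallic_ge_one_and_le_Suc[OF assms, of "Suc k"] by simp
  then obtain d where d: "1 \<le> d" "d \<le> p - 2" "?S \<le> n - d * ?m" "n - d * ?m \<le> (p - 2) * ?S"
    using exists_multiple_shift_into_interval[of ?m "p - 2" "(p - 2) * ?S" ?S n]
      Suc.prems metallic_Suc_le_sum[OF assms, of k] assms
    by (auto simp: algebra_simps)
  obtain a where a: "\<forall>i\<in>{0..k}. a i \<in> {1..p-2}" "n - d * ?m = (\<Sum>i=0..k. a i * metallic p i)"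
    using Suc.IH[OF d(3,4)] by blast
  have "(\<Sum>i=0..k. (a(Suc k := d)) i * metallic p i) = (\<Sum>i=0..k. a i * metallic p i)"
    by (intro sum.cong) auto
  then have "n = (\<Sum>i=0..Suc k. (a(Suc k := d)) i * metallic p i)"
    using a(2) by simp
  moreover have "\<forall>i\<in>{0..Suc k}. (a(Suc k := d)) i \<in> {1..p-2}"
    using a(1) d by (auto simp: le_Suc_eq)
  ultimately show ?case by blast
qed

lemma metallic_intervals_cover:
  assumes "p \<ge> 4"
  shows "1 \<le> n \<Longrightarrow> n \<le> (p - 2) * (\<Sum>i=0..k. metallic p i) \<Longrightarrow>
    \<exists>j. (\<Sum>i=0..j. metallic p i) \<le> n \<and> n \<le> (p - 2) * (\<Sum>i=0..j. metallic p i)"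
proof (induction k)
  case 0
  then show ?case by (intro exI[of _ 0]) simp
next
  case (Suc k)
  show ?case
  proof (cases "n \<le> (p - 2) * (\<Sum>i=0..k. metallic p i)")
    case True
    then show ?thesis using Suc by blast
  next
    case False
    then have "(\<Sum>i=0..Suc k. metallic p i) \<le> n"
      using sum_metallic_Suc_le[OF assms, of k] by linarith
    then show ?thesis using Suc.prems by blast
  qed
qed

theorem theorem4:
  fixes p n :: int
  assumes "p \<ge> 5" and "n > 0"
  shows "\<exists>(k::nat) (a::nat \<Rightarrow> int).
           (\<forall>i\<in>{0..k}. a i \<in> {1..p-2}) \<and> n = (\<Sum>i=0..k. a i * metallic p i)"
proof -
  have p: "p \<ge> 4" using assms(1) by simp
  let ?S = "\<Sum>i=0..nat n. metallic p i"
  have "n \<le> ?S" using sum_metallic_ge[OF p, of "nat n"] assms(2) by simp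
  also have "?S \<le> (p - 2) * ?S"
    using assms(1) sum_metallic_ge[OF p, of "nat n"] by (simp add: mult_le_cancel_right1 split: if_splits)
  finally obtain j where "(\<Sum>i=0..j. metallic p i) \<le> n" "n \<le> (p - 2) * (\<Sum>i=0..j. metallic p i)"
    using metallic_intervals_cover[OF p, of n] assms(2) by auto
  then show ?thesis using metallic_digits_fill_interval[OF p] by blast
qed

end
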